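(* Let $\emptyset\neq S\subseteq\mathbb{S}$. The following assertions are equivalent: (i) $S$ is s-convex; (ii) for all $x_1,x_2\in\mathbb{P}S$ one has $x_1+x_2\in\mathbb{P}S$; (iii) $\mathbb{P}S$ is convex; (iv) $\mathbb{R}_+S$ is a pointed convex cone; (v) there exists a pointed convex cone $K\subseteq\mathbb{R}^n$ such that $S=K\cap\mathbb{S}$; (vi) there exists a convex set $C\subseteq\mathbb{R}^n$ such that $S=\rho(C)$; (vii) there exists a bounded convex set $C\subseteq\mathbb{R}^n$ such that $S=\rho(C)$; (viii) $S=\rho(\operatorname{conv}S)$. If, moreover, $\Phi$ is convex, then (i) is also equivalent to: (ix) $(0,1]\,S$ is convex.
   Context: Standing setting: $n\ge 2$; $\mathbb{R}^n$ carries the usual inner product $\langle\cdot,\cdot\rangle$ and Euclidean norm; $o$ denotes the zero vector. $\Phi:\mathbb{R}^n\to\mathbb{R}_+:=[0,\infty)$ is a continuous function with $\Phi(tx)=t\Phi(x)$ for all $x\in\mathbb{R}^n$, $t\ge 0$, and $\Phi(x)=0$ iff $x=o$. Set $\mathbb{S}:=\{x\in\mathbb{R}^n\mid \Phi(x)=1\}$ (with the topology induced from $\mathbb{R}^n$), $\mathbb{P}:=(0,\infty)$, and $\rho:\mathbb{R}^n\to\{o\}\cup\mathbb{S}$, $\rho(x):=x/\Phi(x)$ for $x\neq o$, $\rho(o):=o$. For $\emptyset\ne\Gamma\subseteq\mathbb{R}$ and $\emptyset\ne A\subseteq\mathbb{R}^n$, $\Gamma A:=\{\gamma a\mid \gamma\in\Gamma,\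 a\in A\}$. For $x,y\in\mathbb{S}$ and $\lambda\in[0,1]$, $\lambda x+_s(1-\lambda)y:=\rho(\lambda x+(1-\lambda)y)$. A nonempty set $S\subseteq\mathbb{S}$ is called s-convex if $\lambda x+_s(1-\lambda)y\in S$ for all $x,y\in S$ and $\lambda\in[0,1]$. A cone $K\subseteq\mathbb{R}^n$ is pointed if $K\cap(-K)=\{o\}$. $\operatorname{conv}$ denotes the convex hull. *)

theory Defs
  imports "HOL-Analysis.Analysis"
begin

definition admissible_Phi :: "('a::euclidean_space \<Rightarrow> real) \<Rightarrow> bool" where
  "admissible_Phi \<Phi> \<longleftrightarrow> continuous_on UNIV \<Phi> \<and> (\<forall>x. \<Phi> x \<ge> 0) \<and>
     (\<forall>x. \<forall>t\<ge>0. \<Phi> (t *\<^sub>R x) = t * \<Phi> x) \<and> (\<forall>x. \<Phi> x = 0 \<longleftrightarrow> x = 0)"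

definition unitS :: "('a::euclidean_space \<Rightarrow> real) \<Rightarrow> 'a set" where
  "unitS \<Phi> = {x. \<Phi> x = 1}"

definition rho :: "('a::euclidean_space \<Rightarrow> real) \<Rightarrow> 'a \<Rightarrow> 'a" where
  "rho \<Phi> x = (if x = 0 then 0 else (1 / \<Phi> x) *\<^sub>R x)"

definition s_comb :: "('a::euclidean_space \<Rightarrow> real) \<Rightarrow> real \<Rightarrow> 'a \<Rightarrow> 'a \<Rightarrow> 'a" where
  "s_comb \<Phi> l x y = rho \<Phi> (l *\<^sub>R x + (1 - l) *\<^sub>R y)"

definition s_convex :: "('a::euclidean_space \<Rightarrow> real) \<Rightarrow> 'a set \<Rightarrow> bool" where
  "s_convex \<Phi> S \<longleftrightarrow> S \<noteq> {} \<and> S \<subseteq> unitS \<Phi> \<and>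
     (\<forall>x\<in>S. \<forall>y\<in>S. \<forall>l\<in>{0..1}. s_comb \<Phi> l x y \<in> S)"

definition setscale :: "real set \<Rightarrow> 'a::real_vector set \<Rightarrow> 'a set" where
  "setscale \<Gamma> A = {\<gamma> *\<^sub>R a | \<gamma> a. \<gamma> \<in> \<Gamma> \<and> a \<in> A}"

definition pointed_cone :: "'a::real_vector set \<Rightarrow> bool" where
  "pointed_cone K \<longleftrightarrow> cone K \<and> K \<inter> uminus ` K = {0}"

end

theory Submission
  imports Defs
begin

text \<open>Everything is read off the punctured cone \<open>P = (0,\<infinity>) S\<close>: for \<open>S\<close> on the unit
  sphere of \<open>\<Phi>\<close>, a point \<open>z\<close> lies in \<open>P\<close> iff \<open>\<rho> z \<in> S\<close>, so s-convexity of \<open>S\<close>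
  says precisely that \<open>P\<close> contains all segments between points of \<open>S\<close>, which for a set
  closed under positive scaling is convexity. Each of the remaining conditions is then
  a standard reformulation of the convexity of \<open>P\<close>: \<open>P \<union> {0}\<close> is a pointed convex cone,
  \<open>P\<close> is the positive hull of any convex \<open>C\<close> with \<open>\<rho>(C) = S\<close> (such as \<open>conv S\<close>, which is
  bounded because \<open>\<Phi>\<close> dominates a multiple of the norm), and for convex \<open>\<Phi>\<close>
  the set \<open>(0,1] S\<close> is \<open>P\<close> cut by the convex sublevel set \<open>\<Phi> \<le> 1\<close>.\<close>

subsection \<open>Positive hulls and pointed cones\<close>

lemma setscale_posI: "t > 0 \<Longrightarrow> s \<in> S \<Longrightarrow> t *\<^sub>R s \<in> setscale {0<..} S"
  unfolding setscale_def greaterThan_iff by blast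

lemma setscale_posE:
  assumes "z \<in> setscale {0<..} S"
  obtains t s where "z = t *\<^sub>R s" "t > 0" "s \<in> S"
  using assms by (auto simp: setscale_def)

lemma setscale_pos_scaleR:
  assumes "c > 0" "z \<in> setscale {0<..} S"
  shows "c *\<^sub>R z \<in> setscale {0<..} S"
proof -
  obtain t s where "z = t *\<^sub>R s" "t > 0" "s \<in> S"
    using assms(2) by (rule setscale_posE)
  then show ?thesis
    using setscale_posI[of "c * t" s S] assms(1) by simp
qed

lemma subset_setscale_pos: "S \<subseteq> setscale {0<..} S"
  using setscale_posI[of 1] by fastforce

lemma zero_in_setscale_pos_iff: "0 \<in> setscale {0<..} S \<longleftrightarrow> 0 \<in> S"
  using subset_setscale_pos[of S] by (auto elim: setscale_posE)

lemma setscale_nonnegI: "t \<ge> 0 \<Longrightarrow> s \<in> S \<Longrightarrow> t *\<^sub>R s \<in> setscale {0..} S"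
  unfolding setscale_def atLeast_iff by blast

lemma setscale_nonneg_eq_insert_zero:
  assumes "S \<noteq> {}"
  shows "setscale {0..} S = insert 0 (setscale {0<..} S)"
proof (intro equalityI subsetI)
  fix z assume "z \<in> setscale {0..} S"
  then obtain t s where "z = t *\<^sub>R s" "t \<ge> 0" "s \<in> S"
    by (auto simp: setscale_def)
  then show "z \<in> insert 0 (setscale {0<..} S)"
    using setscale_posI[of t s S] by (cases "t = 0") auto
next
  obtain s where "s \<in> S"
    using assms by blast
  fix z assume "z \<in> insert 0 (setscale {0<..} S)"
  then consider "z = 0" | t s' where "z = t *\<^sub>R s'" "t > 0" "s' \<in> S"
    by (auto elim: setscale_posE)
  then show "z \<in> setscale {0..} S"
  proof cases
    case 1
    then show ?thesis
      using setscale_nonnegI[of 0 s S] \<open>s \<in> S\<close> by simp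
  next
    case 2
    then show ?thesis
      using setscale_nonnegI[of t s' S] by simp
  qed
qed

lemma setscale_pos_image_rescale:
  assumes "\<And>x. x \<in> C \<Longrightarrow> \<exists>r>0. f x = r *\<^sub>R x"
  shows "setscale {0<..} (f ` C) = setscale {0<..} C"
proof (intro antisym subsetI)
  fix z assume "z \<in> setscale {0<..} (f ` C)"
  then obtain t x where "z = t *\<^sub>R f x" "t > 0" "x \<in> C"
    by (auto elim: setscale_posE)
  moreover obtain r where "r > 0" "f x = r *\<^sub>R x"
    using assms \<open>x \<in> C\<close> by blast
  ultimately show "z \<in> setscale {0<..} C"
    using setscale_posI[of "t * r" x C] by simp
next
  fix z assume "z \<in> setscale {0<..} C"
  then obtain t x where "z = t *\<^sub>R x" "t > 0" "x \<in> C"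
    by (rule setscale_posE)
  moreover obtain r where "r > 0" "f x = r *\<^sub>R x"
    using assms \<open>x \<in> C\<close> by blast
  ultimately have "z = (t / r) *\<^sub>R f x" "t / r > 0"
    by simp_all
  then show "z \<in> setscale {0<..} (f ` C)"
    using setscale_posI[of "t / r" "f x" "f ` C"] \<open>x \<in> C\<close> by simp
qed

lemma convex_combination_rescale:
  fixes x y :: "'a::real_vector"
  assumes "t1 > 0" "t2 > 0" "u \<ge> 0" "v \<ge> 0" "u + v = 1"
  obtains k l where "k > 0" "l \<in> {0..1}"
    "u *\<^sub>R (t1 *\<^sub>R x) + v *\<^sub>R (t2 *\<^sub>R y) = k *\<^sub>R (l *\<^sub>R x + (1 - l) *\<^sub>R y)"
proof -
  define k where "k = u * t1 + v * t2"
  have "k > 0"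
    using assms unfolding k_def by (smt (verit) mult_nonneg_nonneg mult_pos_pos)
  have "u * t1 \<ge> 0" "v * t2 \<ge> 0"
    using assms by simp_all
  then have "u * t1 / k \<in> {0..1}"
    using \<open>k > 0\<close> by (simp add: k_def)
  moreover have "1 - u * t1 / k = v * t2 / k"
    using \<open>k > 0\<close> by (simp add: k_def field_simps)
  then have "k *\<^sub>R ((u * t1 / k) *\<^sub>R x + (1 - u * t1 / k) *\<^sub>R y)
      = u *\<^sub>R (t1 *\<^sub>R x) + v *\<^sub>R (t2 *\<^sub>R y)"
    using \<open>k > 0\<close> by (simp add: scaleR_add_right)
  ultimately show thesis
    using that \<open>k > 0\<close> by metis
qed

lemma convex_setscale_pos:
  assumes "convex C"
  shows "convex (setscale {0<..} C)"
proof (rule convexI)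
  fix a b and u v :: real
  assume a: "a \<in> setscale {0<..} C" and b: "b \<in> setscale {0<..} C"
    and uv: "u \<ge> 0" "v \<ge> 0" "u + v = 1"
  obtain t1 x where "a = t1 *\<^sub>R x" "t1 > 0" "x \<in> C"
    using a by (rule setscale_posE)
  moreover obtain t2 y where "b = t2 *\<^sub>R y" "t2 > 0" "y \<in> C"
    using b by (rule setscale_posE)
  ultimately have ab: "a = t1 *\<^sub>R x" "b = t2 *\<^sub>R y" and t: "t1 > 0" "t2 > 0"
    by simp_all
  obtain k l where "k > 0" "l \<in> {0..1}"
    and eq: "u *\<^sub>R (t1 *\<^sub>R x) + v *\<^sub>R (t2 *\<^sub>R y) = k *\<^sub>R (l *\<^sub>R x + (1 - l) *\<^sub>R y)"
    using convex_combination_rescale[OF t uv] by blast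
  have "l *\<^sub>R x + (1 - l) *\<^sub>R y \<in> C"
    using convexD[OF assms \<open>x \<in> C\<close> \<open>y \<in> C\<close>] \<open>l \<in> {0..1}\<close> by simp
  then show "u *\<^sub>R a + v *\<^sub>R b \<in> setscale {0<..} C"
    unfolding ab eq using setscale_posI \<open>k > 0\<close> by blast
qed

lemma convex_setscale_pos_iff_segments:
  "convex (setscale {0<..} S) \<longleftrightarrow>
     (\<forall>x\<in>S. \<forall>y\<in>S. \<forall>l\<in>{0..1}. l *\<^sub>R x + (1 - l) *\<^sub>R y \<in> setscale {0<..} S)"
proof
  assume convex: "convex (setscale {0<..} S)"
  show "\<forall>x\<in>S. \<forall>y\<in>S. \<forall>l\<in>{0..1}. l *\<^sub>R x + (1 - l) *\<^sub>R y \<in> setscale {0<..} S"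
  proof (intro ballI)
    fix x y and l :: real assume "x \<in> S" "y \<in> S" "l \<in> {0..1}"
    then show "l *\<^sub>R x + (1 - l) *\<^sub>R y \<in> setscale {0<..} S"
      using convexD[OF convex, of x y l "1 - l"] subset_setscale_pos[of S] by auto
  qed
next
  assume segments: "\<forall>x\<in>S. \<forall>y\<in>S. \<forall>l\<in>{0..1}. l *\<^sub>R x + (1 - l) *\<^sub>R y \<in> setscale {0<..} S"
  show "convex (setscale {0<..} S)"
  proof (rule convexI)
    fix a b and u v :: real
    assume a: "a \<in> setscale {0<..} S" and b: "b \<in> setscale {0<..} S"
      and uv: "u \<ge> 0" "v \<ge> 0" "u + v = 1"
    obtain t1 x where "a = t1 *\<^sub>R x" "t1 > 0" "x \<in> S"
      using a by (rule setscale_posE)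
    moreover obtain t2 y where "b = t2 *\<^sub>R y" "t2 > 0" "y \<in> S"
      using b by (rule setscale_posE)
    ultimately have ab: "a = t1 *\<^sub>R x" "b = t2 *\<^sub>R y" and t: "t1 > 0" "t2 > 0"
      by simp_all
    obtain k l where "k > 0" "l \<in> {0..1}"
      and eq: "u *\<^sub>R (t1 *\<^sub>R x) + v *\<^sub>R (t2 *\<^sub>R y) = k *\<^sub>R (l *\<^sub>R x + (1 - l) *\<^sub>R y)"
      using convex_combination_rescale[OF t uv] by blast
    have "l *\<^sub>R x + (1 - l) *\<^sub>R y \<in> setscale {0<..} S"
      using segments \<open>x \<in> S\<close> \<open>y \<in> S\<close> \<open>l \<in> {0..1}\<close> by blast
    then show "u *\<^sub>R a + v *\<^sub>R b \<in> setscale {0<..} S"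
      unfolding ab eq using setscale_pos_scaleR[OF \<open>k > 0\<close>] by blast
  qed
qed

lemma convex_setscale_pos_iff_hull_subset:
  "convex (setscale {0<..} S) \<longleftrightarrow> convex hull S \<subseteq> setscale {0<..} S"
proof
  assume "convex (setscale {0<..} S)"
  then show "convex hull S \<subseteq> setscale {0<..} S"
    by (rule hull_minimal[OF subset_setscale_pos])
next
  assume hull: "convex hull S \<subseteq> setscale {0<..} S"
  have "\<forall>x\<in>S. \<forall>y\<in>S. \<forall>l\<in>{0..1}. l *\<^sub>R x + (1 - l) *\<^sub>R y \<in> setscale {0<..} S"
  proof (intro ballI)
    fix x y and l :: real assume "x \<in> S" "y \<in> S" "l \<in> {0..1}"
    then have "l *\<^sub>R x + (1 - l) *\<^sub>R y \<in> convex hull S"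
      using convexD[OF convex_convex_hull hull_inc hull_inc, of x S y l "1 - l"] by simp
    then show "l *\<^sub>R x + (1 - l) *\<^sub>R y \<in> setscale {0<..} S"
      using hull by blast
  qed
  then show "convex (setscale {0<..} S)"
    using convex_setscale_pos_iff_segments by blast
qed

lemma convex_sublevel:
  assumes "convex_on UNIV f"
  shows "convex {x. f x \<le> c}"
proof (rule convexI)
  fix x y and u v :: real
  assume "x \<in> {x. f x \<le> c}" "y \<in> {x. f x \<le> c}" "u \<ge> 0" "v \<ge> 0" "u + v = 1"
  moreover have "f (u *\<^sub>R x + v *\<^sub>R y) \<le> max (f x) (f y)"
    using convex_lower[OF assms] calculation by simp
  ultimately show "u *\<^sub>R x + v *\<^sub>R y \<in> {x. f x \<le> c}"
    by simp
qed

lemma convex_iff_add_closed: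
  assumes scale: "\<And>c z. c > 0 \<Longrightarrow> z \<in> P \<Longrightarrow> c *\<^sub>R z \<in> P"
  shows "convex P \<longleftrightarrow> (\<forall>x\<in>P. \<forall>y\<in>P. x + y \<in> P)"
proof
  assume "convex P"
  show "\<forall>x\<in>P. \<forall>y\<in>P. x + y \<in> P"
  proof (intro ballI)
    fix x y assume "x \<in> P" "y \<in> P"
    then have "(1/2) *\<^sub>R x + (1/2) *\<^sub>R y \<in> P"
      using \<open>convex P\<close> by (auto intro: convexD)
    then have "2 *\<^sub>R ((1/2) *\<^sub>R x + (1/2) *\<^sub>R y) \<in> P"
      using scale by simp
    then show "x + y \<in> P"
      by (simp add: scaleR_add_right)
  qed
next
  assume add: "\<forall>x\<in>P. \<forall>y\<in>P. x + y \<in> P"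
  show "convex P"
  proof (rule convexI)
    fix x y and u v :: real
    assume "x \<in> P" "y \<in> P" "u \<ge> 0" "v \<ge> 0" "u + v = 1"
    then consider "u = 0" "v = 1" | "v = 0" "u = 1" | "u > 0" "v > 0"
      by fastforce
    then show "u *\<^sub>R x + v *\<^sub>R y \<in> P"
      by cases (use \<open>x \<in> P\<close> \<open>y \<in> P\<close> add scale in auto)
  qed
qed

lemma convex_setscale_pos_iff_add_closed:
  "convex (setscale {0<..} S) \<longleftrightarrow>
     (\<forall>x\<in>setscale {0<..} S. \<forall>y\<in>setscale {0<..} S. x + y \<in> setscale {0<..} S)"
  by (rule convex_iff_add_closed) (rule setscale_pos_scaleR)

lemma convex_pointed_cone_minus_zero:
  assumes "pointed_cone K" "convex K"
  shows "convex (K - {0})"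
proof (rule convexI)
  fix x y and u v :: real
  assume "x \<in> K - {0}" "y \<in> K - {0}" "u \<ge> 0" "v \<ge> 0" "u + v = 1"
  have "u *\<^sub>R x + v *\<^sub>R y \<in> K"
    using convexD[OF assms(2)] \<open>x \<in> K - {0}\<close> \<open>y \<in> K - {0}\<close> \<open>u \<ge> 0\<close> \<open>v \<ge> 0\<close> \<open>u + v = 1\<close> by auto
  moreover have "u *\<^sub>R x + v *\<^sub>R y \<noteq> 0"
  proof
    assume sum_zero: "u *\<^sub>R x + v *\<^sub>R y = 0"
    consider "u = 0" "v = 1" | "v = 0" "u = 1" | "u > 0" "v > 0"
      using \<open>u \<ge> 0\<close> \<open>v \<ge> 0\<close> \<open>u + v = 1\<close> by fastforce
    then show False
    proof cases
      case 3
      have "u *\<^sub>R x \<in> K" "v *\<^sub>R y \<in> K"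
        using assms(1) \<open>x \<in> K - {0}\<close> \<open>y \<in> K - {0}\<close> 3 by (auto simp: pointed_cone_def cone_def)
      moreover have "u *\<^sub>R x = - (v *\<^sub>R y)"
        using sum_zero by (simp add: eq_neg_iff_add_eq_0)
      ultimately have "u *\<^sub>R x \<in> K \<inter> uminus ` K"
        by auto
      then have "u *\<^sub>R x = 0"
        using assms(1) unfolding pointed_cone_def by blast
      then show False
        using 3 \<open>x \<in> K - {0}\<close> by simp
    qed (use sum_zero \<open>x \<in> K - {0}\<close> \<open>y \<in> K - {0}\<close> in auto)
  qed
  ultimately show "u *\<^sub>R x + v *\<^sub>R y \<in> K - {0}"
    by blast
qed

lemma convex_iff_pointed_convex_cone_insert_zero:
  assumes scale: "\<And>c z. c > 0 \<Longrightarrow> z \<in> P \<Longrightarrow> c *\<^sub>R z \<in> P" and "0 \<notin> P"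
  shows "convex P \<longleftrightarrow> pointed_cone (insert 0 P) \<and> convex (insert 0 P)"
proof
  assume "convex P"
  then have add: "\<forall>x\<in>P. \<forall>y\<in>P. x + y \<in> P"
    using convex_iff_add_closed[OF scale] by blast
  have "\<forall>x\<in>insert 0 P. \<forall>c\<ge>0. c *\<^sub>R x \<in> insert 0 P"
    using scale by (auto simp: less_eq_real_def)
  then have cone: "convex (insert 0 P) \<and> cone (insert 0 P)"
    using add by (subst convex_cone) auto
  have "insert 0 P \<inter> uminus ` insert 0 P = {0}"
  proof (intro equalityI subsetI)
    fix z assume z: "z \<in> insert 0 P \<inter> uminus ` insert 0 P"
    show "z \<in> {0}"
    proof (rule ccontr)
      assume "z \<notin> {0}"
      then have "z \<in> P" "- z \<in> P"
        using z by auto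
      then have "z + - z \<in> P"
        using add by blast
      then show False
        using \<open>0 \<notin> P\<close> by simp
    qed
  qed auto
  then show "pointed_cone (insert 0 P) \<and> convex (insert 0 P)"
    using cone by (simp add: pointed_cone_def)
next
  assume "pointed_cone (insert 0 P) \<and> convex (insert 0 P)"
  then have "convex (insert 0 P - {0})"
    by (blast intro: convex_pointed_cone_minus_zero)
  then show "convex P"
    using \<open>0 \<notin> P\<close> by simp
qed

subsection \<open>The radial projection of an admissible gauge\<close>

locale admissible_gauge =
  fixes \<Phi> :: "'a::euclidean_space \<Rightarrow> real"
  assumes admissible: "admissible_Phi \<Phi>"
begin

lemma homogeneous: "t \<ge> 0 \<Longrightarrow> \<Phi> (t *\<^sub>R x) = t * \<Phi> x"
  using admissible by (simp add: admissible_Phi_def)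

lemma positive: "x \<noteq> 0 \<Longrightarrow> \<Phi> x > 0"
  using admissible unfolding admissible_Phi_def by (metis less_eq_real_def)

lemma gauge_zero: "\<Phi> 0 = 0"
  using admissible by (simp add: admissible_Phi_def)

lemma unitS_nonzero: "x \<in> unitS \<Phi> \<Longrightarrow> x \<noteq> 0"
  using gauge_zero by (auto simp: unitS_def)

lemma rho_unitS: "x \<in> unitS \<Phi> \<Longrightarrow> rho \<Phi> x = x"
  using unitS_nonzero by (simp add: rho_def unitS_def)

lemma rho_in_unitS: "x \<noteq> 0 \<Longrightarrow> rho \<Phi> x \<in> unitS \<Phi>"
  using positive[of x] by (simp add: rho_def unitS_def homogeneous)

lemma rho_eq_scaleR: "\<exists>r>0. rho \<Phi> x = r *\<^sub>R x"
  using positive by (cases "x = 0") (auto simp: rho_def intro: exI[of _ 1])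

lemma scaleR_rho: "\<Phi> x *\<^sub>R rho \<Phi> x = x"
  using positive[of x] by (cases "x = 0") (auto simp: rho_def)

lemma rho_scaleR: "c > 0 \<Longrightarrow> rho \<Phi> (c *\<^sub>R x) = rho \<Phi> x"
  using positive by (simp add: rho_def homogeneous)

lemma mem_setscale_pos_iff_rho:
  assumes "S \<subseteq> unitS \<Phi>"
  shows "z \<in> setscale {0<..} S \<longleftrightarrow> rho \<Phi> z \<in> S"
proof
  assume "z \<in> setscale {0<..} S"
  then obtain t s where "z = t *\<^sub>R s" "t > 0" "s \<in> S"
    by (rule setscale_posE)
  then have "rho \<Phi> z = s"
    using assms rho_scaleR rho_unitS by auto
  then show "rho \<Phi> z \<in> S"
    using \<open>s \<in> S\<close> by simp
next
  assume "rho \<Phi> z \<in> S"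
  then have "rho \<Phi> z \<noteq> 0"
    using assms unitS_nonzero by blast
  then have "\<Phi> z > 0"
    using positive by (cases "z = 0") (auto simp: rho_def)
  then have "\<Phi> z *\<^sub>R rho \<Phi> z \<in> setscale {0<..} S"
    using setscale_posI \<open>rho \<Phi> z \<in> S\<close> by blast
  then show "z \<in> setscale {0<..} S"
    by (simp add: scaleR_rho)
qed

lemma s_convex_iff_segments:
  assumes "S \<noteq> {}" "S \<subseteq> unitS \<Phi>"
  shows "s_convex \<Phi> S \<longleftrightarrow>
    (\<forall>x\<in>S. \<forall>y\<in>S. \<forall>l\<in>{0..1}. l *\<^sub>R x + (1 - l) *\<^sub>R y \<in> setscale {0<..} S)"
proof -
  have iff: "s_comb \<Phi> l x y \<in> S \<longleftrightarrow> l *\<^sub>R x + (1 - l) *\<^sub>R y \<in> setscale {0<..} S" for l x y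
    unfolding s_comb_def by (rule mem_setscale_pos_iff_rho[OF assms(2), symmetric])
  show ?thesis
    unfolding s_convex_def iff using assms by simp
qed

lemma s_convex_iff_convex_setscale_pos:
  assumes "S \<noteq> {}" "S \<subseteq> unitS \<Phi>"
  shows "s_convex \<Phi> S \<longleftrightarrow> convex (setscale {0<..} S)"
  using s_convex_iff_segments[OF assms] convex_setscale_pos_iff_segments by blast

lemma setscale_pos_inter_unitS:
  assumes "S \<subseteq> unitS \<Phi>"
  shows "setscale {0<..} S \<inter> unitS \<Phi> = S"
proof (intro equalityI subsetI)
  fix z assume z: "z \<in> setscale {0<..} S \<inter> unitS \<Phi>"
  then have "rho \<Phi> z \<in> S"
    using mem_setscale_pos_iff_rho[OF assms] by blast
  moreover have "rho \<Phi> z = z"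
    using z rho_unitS by blast
  ultimately show "z \<in> S"
    by simp
qed (use assms subset_setscale_pos in blast)

lemma cone_minus_zero_eq_setscale_pos:
  assumes "cone K" "S = K \<inter> unitS \<Phi>"
  shows "K - {0} = setscale {0<..} S"
proof (intro equalityI subsetI)
  fix z assume z: "z \<in> K - {0}"
  obtain r where "r > 0" "rho \<Phi> z = r *\<^sub>R z"
    using rho_eq_scaleR by blast
  then have "rho \<Phi> z \<in> K"
    using assms(1) z unfolding cone_def by (simp add: less_imp_le)
  then have "rho \<Phi> z \<in> S"
    using assms(2) rho_in_unitS z by blast
  then show "z \<in> setscale {0<..} S"
    using mem_setscale_pos_iff_rho[of S] assms(2) by blast
next
  fix z assume z: "z \<in> setscale {0<..} S"
  then have "z \<noteq> 0"
    using assms(2) zero_in_setscale_pos_iff unitS_nonzero by blast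
  obtain t s where "z = t *\<^sub>R s" "t > 0" "s \<in> S"
    using z by (rule setscale_posE)
  then have "z \<in> K"
    using assms unfolding cone_def by (simp add: less_imp_le)
  then show "z \<in> K - {0}"
    using \<open>z \<noteq> 0\<close> by blast
qed

lemma setscale_pos_rho_image: "setscale {0<..} (rho \<Phi> ` C) = setscale {0<..} C"
  using setscale_pos_image_rescale rho_eq_scaleR by blast

text \<open>Compactness of the Euclidean sphere makes \<open>\<Phi>\<close> comparable to the norm.\<close>

lemma norm_bounded_by_gauge: "\<exists>m>0. \<forall>x. m * norm x \<le> \<Phi> x"
proof -
  have "sphere (0::'a) 1 \<noteq> {}"
    using vector_choose_size[of 1] by auto
  moreover have "continuous_on (sphere 0 1) \<Phi>"
    using admissible continuous_on_subset by (auto simp: admissible_Phi_def)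
  ultimately obtain u where u: "u \<in> sphere 0 1" "\<And>y. y \<in> sphere 0 1 \<Longrightarrow> \<Phi> u \<le> \<Phi> y"
    using continuous_attains_inf[OF compact_sphere] by metis
  have "\<Phi> u * norm x \<le> \<Phi> x" for x
  proof (cases "x = 0")
    case False
    have "\<Phi> u \<le> \<Phi> ((1 / norm x) *\<^sub>R x)"
      using u(2) False by simp
    then show ?thesis
      using False by (simp add: homogeneous field_simps)
  qed (simp add: gauge_zero)
  moreover have "\<Phi> u > 0"
    using u(1) positive[of u] by (cases "u = 0") auto
  ultimately show ?thesis
    by blast
qed

lemma bounded_unitS: "bounded (unitS \<Phi>)"
proof -
  obtain m where m: "m > 0" "\<And>x. m * norm x \<le> \<Phi> x"
    using norm_bounded_by_gauge by blast
  have "norm x \<le> 1 / m" if "x \<in> unitS \<Phi>" for x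
    using that m(1) m(2)[of x] by (simp add: unitS_def field_simps)
  then show ?thesis
    unfolding bounded_iff by blast
qed

lemma setscale_pos_le_one_eq:
  assumes "S \<subseteq> unitS \<Phi>"
  shows "setscale {0<..1} S = setscale {0<..} S \<inter> {z. \<Phi> z \<le> 1}"
proof (intro equalityI subsetI)
  fix z assume "z \<in> setscale {0<..1} S"
  then obtain t s where "z = t *\<^sub>R s" "0 < t" "t \<le> 1" "s \<in> S"
    by (auto simp: setscale_def)
  moreover have "\<Phi> (t *\<^sub>R s) = t"
    using calculation assms by (auto simp: homogeneous unitS_def)
  ultimately show "z \<in> setscale {0<..} S \<inter> {z. \<Phi> z \<le> 1}"
    using setscale_posI by auto
next
  fix z assume z: "z \<in> setscale {0<..} S \<inter> {z. \<Phi> z \<le> 1}"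
  then have "rho \<Phi> z \<in> S"
    using mem_setscale_pos_iff_rho[OF assms] by blast
  then have "\<Phi> z > 0"
    using assms unitS_nonzero positive by (cases "z = 0") (auto simp: rho_def)
  then have "\<Phi> z *\<^sub>R rho \<Phi> z \<in> setscale {0<..1} S"
    using z \<open>rho \<Phi> z \<in> S\<close> unfolding setscale_def greaterThanAtMost_iff by blast
  then show "z \<in> setscale {0<..1} S"
    by (simp add: scaleR_rho)
qed

lemma convex_setscale_pos_iff_pointed_cone:
  assumes "S \<noteq> {}" "S \<subseteq> unitS \<Phi>"
  shows "convex (setscale {0<..} S) \<longleftrightarrow>
    pointed_cone (setscale {0..} S) \<and> convex (setscale {0..} S)"
proof -
  have "0 \<notin> setscale {0<..} S"
    using assms(2) unitS_nonzero zero_in_setscale_pos_iff by blast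
  then show ?thesis
    unfolding setscale_nonneg_eq_insert_zero[OF assms(1)]
    by (rule convex_iff_pointed_convex_cone_insert_zero[rotated]) (rule setscale_pos_scaleR)
qed

lemma convex_setscale_pos_iff_cone_section:
  assumes "S \<noteq> {}" "S \<subseteq> unitS \<Phi>"
  shows "convex (setscale {0<..} S) \<longleftrightarrow>
    (\<exists>K. pointed_cone K \<and> convex K \<and> S = K \<inter> unitS \<Phi>)"
proof
  assume "convex (setscale {0<..} S)"
  then have "pointed_cone (setscale {0..} S) \<and> convex (setscale {0..} S)"
    using convex_setscale_pos_iff_pointed_cone[OF assms] by blast
  moreover have "S = setscale {0..} S \<inter> unitS \<Phi>"
    unfolding setscale_nonneg_eq_insert_zero[OF assms(1)]
    using setscale_pos_inter_unitS[OF assms(2)] unitS_nonzero by auto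
  ultimately show "\<exists>K. pointed_cone K \<and> convex K \<and> S = K \<inter> unitS \<Phi>"
    by blast
next
  assume "\<exists>K. pointed_cone K \<and> convex K \<and> S = K \<inter> unitS \<Phi>"
  then obtain K where K: "pointed_cone K" "convex K" "S = K \<inter> unitS \<Phi>"
    by blast
  then have "K - {0} = setscale {0<..} S"
    using cone_minus_zero_eq_setscale_pos by (simp add: pointed_cone_def)
  then show "convex (setscale {0<..} S)"
    using convex_pointed_cone_minus_zero[OF K(1,2)] by simp
qed

lemma convex_setscale_pos_of_rho_image:
  assumes "convex C" "S = rho \<Phi> ` C"
  shows "convex (setscale {0<..} S)"
  using convex_setscale_pos[OF assms(1)] by (simp add: assms(2) setscale_pos_rho_image)

lemma rho_convex_hull_eq:
  assumes "S \<subseteq> unitS \<Phi>" "convex (setscale {0<..} S)"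
  shows "rho \<Phi> ` (convex hull S) = S"
proof
  have "convex hull S \<subseteq> setscale {0<..} S"
    using assms(2) convex_setscale_pos_iff_hull_subset by blast
  then show "rho \<Phi> ` (convex hull S) \<subseteq> S"
    using mem_setscale_pos_iff_rho[OF assms(1)] by blast
  show "S \<subseteq> rho \<Phi> ` (convex hull S)"
  proof
    fix s assume "s \<in> S"
    then have "rho \<Phi> s = s"
      using assms(1) rho_unitS by blast
    then show "s \<in> rho \<Phi> ` (convex hull S)"
      using hull_inc[OF \<open>s \<in> S\<close>, of convex] by (metis image_eqI)
  qed
qed

lemma convex_setscale_pos_iff_rho_images:
  assumes "S \<subseteq> unitS \<Phi>"
  shows "convex (setscale {0<..} S) \<longleftrightarrow> S = rho \<Phi> ` (convex hull S)"
    and "convex (setscale {0<..} S) \<longleftrightarrow> (\<exists>C. convex C \<and> S = rho \<Phi> ` C)"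
    and "convex (setscale {0<..} S) \<longleftrightarrow> (\<exists>C. bounded C \<and> convex C \<and> S = rho \<Phi> ` C)"
proof -
  have hull: "bounded (convex hull S)" "convex (convex hull S)"
    using bounded_subset[OF bounded_unitS assms] by (auto simp: bounded_convex_hull)
  show hull_iff: "convex (setscale {0<..} S) \<longleftrightarrow> S = rho \<Phi> ` (convex hull S)"
    using rho_convex_hull_eq[OF assms] convex_setscale_pos_of_rho_image[OF hull(2)] by metis
  show "convex (setscale {0<..} S) \<longleftrightarrow> (\<exists>C. convex C \<and> S = rho \<Phi> ` C)"
  proof
    assume "convex (setscale {0<..} S)"
    then show "\<exists>C. convex C \<and> S = rho \<Phi> ` C"
      using hull_iff hull(2) by (intro exI[of _ "convex hull S"]) simp
  qed (auto intro: convex_setscale_pos_of_rho_image)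
  show "convex (setscale {0<..} S) \<longleftrightarrow> (\<exists>C. bounded C \<and> convex C \<and> S = rho \<Phi> ` C)"
  proof
    assume "convex (setscale {0<..} S)"
    then show "\<exists>C. bounded C \<and> convex C \<and> S = rho \<Phi> ` C"
      using hull_iff hull by (intro exI[of _ "convex hull S"]) simp
  qed (auto intro: convex_setscale_pos_of_rho_image)
qed

lemma convex_setscale_pos_iff_le_one:
  assumes "S \<subseteq> unitS \<Phi>" "convex_on UNIV \<Phi>"
  shows "convex (setscale {0<..} S) \<longleftrightarrow> convex (setscale {0<..1} S)"
proof
  assume "convex (setscale {0<..} S)"
  then show "convex (setscale {0<..1} S)"
    using setscale_pos_le_one_eq[OF assms(1)] convex_sublevel[OF assms(2)] convex_Int by metis
next
  assume convex: "convex (setscale {0<..1} S)"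
  have "S \<subseteq> setscale {0<..} S \<inter> {z. \<Phi> z \<le> 1}"
    using subset_setscale_pos[of S] assms(1) by (auto simp: unitS_def)
  then have "convex hull S \<subseteq> setscale {0<..1} S"
    unfolding setscale_pos_le_one_eq[OF assms(1), symmetric] using convex by (rule hull_minimal)
  also have "\<dots> \<subseteq> setscale {0<..} S"
    by (simp add: setscale_pos_le_one_eq[OF assms(1)])
  finally show "convex (setscale {0<..} S)"
    by (simp add: convex_setscale_pos_iff_hull_subset)
qed

end

theorem proposition1:
  fixes \<Phi> :: "'a::euclidean_space \<Rightarrow> real" and S :: "'a set"
  assumes "DIM('a) \<ge> 2"
    and "admissible_Phi \<Phi>"
    and "S \<noteq> {}" and "S \<subseteq> unitS \<Phi>"
  shows "(s_convex \<Phi> S \<longleftrightarrow>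
            (\<forall>x1\<in>setscale {0<..} S. \<forall>x2\<in>setscale {0<..} S. x1 + x2 \<in> setscale {0<..} S))
       \<and> (s_convex \<Phi> S \<longleftrightarrow> convex (setscale {0<..} S))
       \<and> (s_convex \<Phi> S \<longleftrightarrow> pointed_cone (setscale {0..} S) \<and> convex (setscale {0..} S))
       \<and> (s_convex \<Phi> S \<longleftrightarrow>
            (\<exists>K. pointed_cone K \<and> convex K \<and> S = K \<inter> unitS \<Phi>))
       \<and> (s_convex \<Phi> S \<longleftrightarrow> (\<exists>C. convex C \<and> S = rho \<Phi> ` C))
       \<and> (s_convex \<Phi> S \<longleftrightarrow> (\<exists>C. bounded C \<and> convex C \<and> S = rho \<Phi> ` C))
       \<and> (s_convex \<Phi> S \<longleftrightarrow> S = rho \<Phi> ` (convex hull S))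
       \<and> (convex_on UNIV \<Phi> \<longrightarrow> (s_convex \<Phi> S \<longleftrightarrow> convex (setscale {0<..1} S)))"
proof -
  interpret admissible_gauge \<Phi>
    using assms(2) by unfold_locales
  note S = assms(3,4)
  show ?thesis
    unfolding s_convex_iff_convex_setscale_pos[OF S]
    by (intro conjI impI refl convex_setscale_pos_iff_add_closed
        convex_setscale_pos_iff_pointed_cone[OF S] convex_setscale_pos_iff_cone_section[OF S]
        convex_setscale_pos_iff_rho_images[OF assms(4)] convex_setscale_pos_iff_le_one[OF assms(4)])
qed

end
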